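(* Let $\alpha\in(0,2)$ and let $(\varepsilon_t)_{t\in\mathbb{Z}}$ be i.i.d. with $\varepsilon_t\sim S_\alpha(1/\sqrt2,0,0)$. Let $X_{t,T}=\sum_{j=0}^\infty a_{t,T}(j)\varepsilon_{t-j}$ with real coefficients satisfying $\sum_{j\ge0}|a_{t,T}(j)|^{\min\{1,\alpha\}}<\infty$ for all $t$ (an AR regular solution of an $\alpha$-stable tvARMA system). Let $h\ge1$, $T'=T-h-1$, and $l\in\{1,\dots,h\}$. Among predictors of $X_{T'+l,T}$ of the form $\hat X_{T'}(l)=\sum_{j=0}^\infty A(T',T'-j)\varepsilon_{T'-j}$ with real coefficients $A(T',T'-j)$ (such that the series converges), the dispersion of the prediction error $e_{T'}(l)=X_{T'+l,T}-\hat X_{T'}(l)$ is minimized by the predictor $$\hat X_{T'}(l)=\sum_{j=0}^{\infty}a_{T'+l,T}(j+l)\,\varepsilon_{T'-j}.$$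
   Context: $S_\alpha(\sigma,0,0)$ denotes the symmetric $\alpha$-stable law with characteristic function $\exp\{-\sigma^\alpha|\theta|^\alpha\}$. The dispersion of a symmetric $\alpha$-stable random variable with scale parameter $\sigma$ is $\sigma^\alpha$; the prediction error above is a symmetric $\alpha$-stable random variable. *)

theory Defs
  imports "HOL-Probability.Probability"
begin

text \<open>Y is a symmetric alpha-stable random variable with dispersion d, i.e.
  Y ~ S_alpha(sigma,0,0) with sigma^alpha = d: its characteristic function
  is exp(-d |theta|^alpha).\<close>
definition sas_disp :: "'a measure \<Rightarrow> real \<Rightarrow> real \<Rightarrow> ('a \<Rightarrow> real) \<Rightarrow> bool" where
  "sas_disp M \<alpha> d Y \<longleftrightarrow> Y \<in> borel_measurable M \<and> 0 \<le> d \<and>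
     (\<forall>\<theta>::real. char (distr M borel Y) \<theta> = complex_of_real (exp (- d * \<bar>\<theta>\<bar> powr \<alpha>)))"

end

theory Submission
  imports Defs
begin

text \<open>Index the innovations backwards from the target time, Z j = \<open>\<epsilon>\<close> (T' + l - j). The
  target is then \<open>\<Sum>j. a j * Z j\<close>, a predictor is \<open>\<Sum>j. A j * Z (j + l)\<close>, and the prediction
  error is the series \<open>\<Sum>k. b k * Z k\<close> with b k = a k for k < l and b k = a k - A (k - l)
  otherwise. A finite combination of independent symmetric \<open>\<alpha>\<close>-stable variables of dispersion
  c is symmetric \<open>\<alpha>\<close>-stable with dispersion \<open>c * (\<Sum>k. \<bar>b k\<bar> powr \<alpha>)\<close>; since characteristic
  functions pass to almost sure limits, the same holds for the whole series, whose dispersion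
  is therefore at least \<open>c * (\<Sum>k<l. \<bar>a k\<bar> powr \<alpha>)\<close>, with equality for A j = a (j + l).
  The target series itself converges almost surely because \<open>\<Sum>j. \<bar>a j\<bar> powr \<alpha>\<close> is finite: a
  variable of small dispersion has small tails uniformly, and a maximal inequality for partial
  sums of independent variables turns this into the Cauchy property.\<close>

lemma pred_sum_components:
  assumes "J \<subseteq> I" "Measurable.pred borel P"
  shows "Measurable.pred (PiM I (\<lambda>_. borel)) (\<lambda>f. P (\<Sum>j\<in>J. f j :: real))"
proof -
  have "(\<lambda>f. \<Sum>j\<in>J. f j :: real) \<in> borel_measurable (PiM I (\<lambda>_. borel))"
    using assms(1) by (intro borel_measurable_sum measurable_component_singleton) auto
  from measurable_compose[OF this assms(2)] show ?thesis .
qed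

lemma sum_atLeastLessThan_le_suminf_shift:
  fixes f :: "nat \<Rightarrow> real"
  assumes "summable f" "\<And>n. 0 \<le> f n"
  shows "(\<Sum>j\<in>{k..<n}. f j) \<le> (\<Sum>j. f (j + k))"
proof -
  have "(\<Sum>j\<in>{k..<n}. f j) = (\<Sum>j\<in>{0..<n - k}. f (j + k))"
    unfolding sum.atLeastLessThan_shift_0[of _ k n] by (simp add: add.commute)
  also have "\<dots> \<le> (\<Sum>j. f (j + k))"
    using assms by (intro sum_le_suminf summable_ignore_initial_segment) auto
  finally show ?thesis .
qed

lemma first_exit_partial_sum:
  fixes f :: "nat \<Rightarrow> real"
  assumes "k \<in> {m..n}" "2 * t \<le> \<bar>\<Sum>j\<in>{m..<k}. f j\<bar>" "\<not> t \<le> \<bar>\<Sum>j\<in>{m..<n}. f j\<bar>"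
  obtains k0 where "k0 \<in> {m..n}" "2 * t \<le> \<bar>\<Sum>j\<in>{m..<k0}. f j\<bar>"
    "\<forall>i\<in>{m..<k0}. \<bar>\<Sum>j\<in>{m..<i}. f j\<bar> < 2 * t" "t \<le> \<bar>\<Sum>j\<in>{k0..<n}. f j\<bar>"
proof -
  define k0 where "k0 = (LEAST k. k \<in> {m..n} \<and> 2 * t \<le> \<bar>\<Sum>j\<in>{m..<k}. f j\<bar>)"
  have k0: "k0 \<in> {m..n} \<and> 2 * t \<le> \<bar>\<Sum>j\<in>{m..<k0}. f j\<bar>"
    unfolding k0_def by (rule LeastI[of _ k]) (use assms in auto)
  have "\<bar>\<Sum>j\<in>{m..<i}. f j\<bar> < 2 * t" if i: "i \<in> {m..<k0}" for i
  proof -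
    have "\<not> (i \<in> {m..n} \<and> 2 * t \<le> \<bar>\<Sum>j\<in>{m..<i}. f j\<bar>)"
      using i unfolding k0_def by (intro not_less_Least) auto
    then show ?thesis using i k0 by auto
  qed
  moreover have "(\<Sum>j\<in>{m..<k0}. f j) + (\<Sum>j\<in>{k0..<n}. f j) = (\<Sum>j\<in>{m..<n}. f j)"
    using k0 by (intro sum.atLeastLessThan_concat) auto
  then have "t \<le> \<bar>\<Sum>j\<in>{k0..<n}. f j\<bar>" using k0 assms(3) by linarith
  ultimately show ?thesis using k0 that by blast
qed

lemma summable_abs_powr_larger_exponent:
  fixes x :: "nat \<Rightarrow> real"
  assumes summable: "summable (\<lambda>j. \<bar>x j\<bar> powr p)" and "0 < p" "p \<le> q"
  shows "summable (\<lambda>j. \<bar>x j\<bar> powr q)"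
proof (rule summable_comparison_test_ev[OF _ summable])
  have "eventually (\<lambda>j. \<bar>x j\<bar> powr p < 1) sequentially"
    using summable_LIMSEQ_zero[OF summable] by (rule order_tendstoD) simp
  then show "eventually (\<lambda>j. norm (\<bar>x j\<bar> powr q) \<le> \<bar>x j\<bar> powr p) sequentially"
  proof (rule eventually_mono)
    fix j assume "\<bar>x j\<bar> powr p < 1"
    then have "\<bar>x j\<bar> \<le> 1" using ge_one_powr_ge_zero[of "\<bar>x j\<bar>" p] \<open>0 < p\<close> by linarith
    then show "norm (\<bar>x j\<bar> powr q) \<le> \<bar>x j\<bar> powr p" using \<open>p \<le> q\<close> by (simp add: powr_mono')
  qed
qed

lemma summable_if_tail_sums_small:
  fixes f :: "nat \<Rightarrow> 'a::banach"
  assumes small: "\<And>e. 0 < e \<Longrightarrow> \<exists>m. \<forall>k\<ge>m. norm (\<Sum>j\<in>{m..<k}. f j) < e"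
  shows "summable f"
  unfolding summable_Cauchy
proof (intro allI impI)
  fix e :: real assume "0 < e"
  then have "0 < e / 2" by simp
  from small[OF this] obtain m where m: "\<forall>k\<ge>m. norm (\<Sum>j\<in>{m..<k}. f j) < e / 2" ..
  have "norm (\<Sum>j\<in>{m'..<n}. f j) < e" if "m \<le> m'" for m' n
  proof (cases "m' \<le> n")
    case True
    have "(\<Sum>j\<in>{m..<m'}. f j) + (\<Sum>j\<in>{m'..<n}. f j) = (\<Sum>j\<in>{m..<n}. f j)"
      using that True by (rule sum.atLeastLessThan_concat)
    then have "(\<Sum>j\<in>{m'..<n}. f j) = (\<Sum>j\<in>{m..<n}. f j) - (\<Sum>j\<in>{m..<m'}. f j)"
      by (simp add: algebra_simps)
    then have "norm (\<Sum>j\<in>{m'..<n}. f j) \<le> norm (\<Sum>j\<in>{m..<n}. f j) + norm (\<Sum>j\<in>{m..<m'}. f j)"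
      by (simp only: norm_triangle_ineq4)
    moreover have "norm (\<Sum>j\<in>{m..<n}. f j) < e / 2" "norm (\<Sum>j\<in>{m..<m'}. f j) < e / 2"
      using m that True by simp_all
    ultimately show ?thesis by linarith
  qed (use \<open>0 < e\<close> in simp)
  then show "\<exists>N. \<forall>m'\<ge>N. \<forall>n. norm (\<Sum>j\<in>{m'..<n}. f j) < e" by blast
qed

context prob_space
begin

lemma indep_vars_reindex:
  assumes "indep_vars M' X I" "inj_on g J" "g ` J \<subseteq> I"
  shows "indep_vars (\<lambda>j. M' (g j)) (\<lambda>j. X (g j)) J"
proof -
  from assms(1) have rv: "\<forall>i\<in>I. random_variable (M' i) (X i)" and
    ind: "indep_sets (\<lambda>i. {X i -` A \<inter> space M | A. A \<in> sets (M' i)}) I"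
    by (auto simp: indep_vars_def2)
  show ?thesis unfolding indep_vars_def2
  proof (intro conjI ballI)
    fix j assume "j \<in> J" then show "random_variable (M' (g j)) (X (g j))" using rv assms(3) by auto
  next
    show "indep_sets (\<lambda>j. {X (g j) -` A \<inter> space M | A. A \<in> sets (M' (g j))}) J"
      unfolding indep_sets_def
    proof (intro conjI ballI allI impI)
      fix j assume "j \<in> J" then show "{X (g j) -` A \<inter> space M | A. A \<in> sets (M' (g j))} \<subseteq> events"
        using ind assms(3) unfolding indep_sets_def by auto
    next
      fix K A assume K: "K \<subseteq> J" "K \<noteq> {}" "finite K"
        and A: "A \<in> Pi K (\<lambda>j. {X (g j) -` A \<inter> space M | A. A \<in> sets (M' (g j))})"
      define A' where "A' i = A (the_inv_into K g i)" for i
      have inj: "inj_on g K" using assms(2) K(1) inj_on_subset by blast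
      have A'g: "A' (g j) = A j" if "j \<in> K" for j using that inj by (simp add: A'_def the_inv_into_f_f)
      have A'P: "A' \<in> Pi (g`K) (\<lambda>i. {X i -` A \<inter> space M | A. A \<in> sets (M' i)})"
      proof
        fix i assume "i \<in> g`K"
        then obtain j where j: "j \<in> K" "i = g j" by blast
        then have "A j \<in> {X (g j) -` A \<inter> space M | A. A \<in> sets (M' (g j))}" using A by blast
        then show "A' i \<in> {X i -` A \<inter> space M | A. A \<in> sets (M' i)}" using j A'g by simp
      qed
      have "prob (\<Inter>i\<in>g`K. A' i) = (\<Prod>i\<in>g`K. prob (A' i))"
      proof -
        have "g`K \<subseteq> I" "g`K \<noteq> {}" "finite (g`K)" using K assms(3) by auto
        with ind A'P show ?thesis unfolding indep_sets_def by (elim conjE) (drule spec[of _ "g`K"], simp)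
      qed
      moreover have "(\<Inter>i\<in>g`K. A' i) = (\<Inter>j\<in>K. A j)" using A'g by auto
      moreover have "(\<Prod>i\<in>g`K. prob (A' i)) = (\<Prod>j\<in>K. prob (A j))"
        using A'g by (simp add: prod.reindex[OF inj])
      ultimately show "prob (\<Inter>j\<in>K. A j) = (\<Prod>j\<in>K. prob (A j))" by simp
    qed
  qed
qed

lemma indep_vars_prob_restrict_conj:
  fixes Y :: "'i \<Rightarrow> 'a \<Rightarrow> real"
  assumes ind: "indep_vars (\<lambda>_. borel) Y K" and IJ: "I \<inter> J = {}" "I \<subseteq> K" "J \<subseteq> K"
    and [measurable]: "Measurable.pred (PiM I (\<lambda>_. borel)) P" "Measurable.pred (PiM J (\<lambda>_. borel)) Q"
  shows "prob {\<omega>\<in>space M. P (restrict (\<lambda>i. Y i \<omega>) I) \<and> Q (restrict (\<lambda>j. Y j \<omega>) J)} =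
    prob {\<omega>\<in>space M. P (restrict (\<lambda>i. Y i \<omega>) I)} * prob {\<omega>\<in>space M. Q (restrict (\<lambda>j. Y j \<omega>) J)}"
proof -
  have "indep_var (count_space UNIV) (P \<circ> (\<lambda>\<omega>. restrict (\<lambda>i. Y i \<omega>) I))
      (count_space UNIV) (Q \<circ> (\<lambda>\<omega>. restrict (\<lambda>j. Y j \<omega>) J))"
    by (rule indep_var_compose[OF indep_var_restrict[OF ind IJ]]) auto
  from indep_varD[OF this, of "{True}" "{True}"] show ?thesis
    by (simp add: vimage_def Int_def conj_commute)
qed

lemma prob_first_exit_Int_tail_sum:
  fixes Y :: "nat \<Rightarrow> 'a \<Rightarrow> real"
  assumes ind: "indep_vars (\<lambda>_. borel) Y UNIV" and "m \<le> k"
  shows "prob {\<omega>\<in>space M. (s \<le> \<bar>\<Sum>j\<in>{m..<k}. Y j \<omega>\<bar> \<and> (\<forall>i\<in>{m..<k}. \<bar>\<Sum>j\<in>{m..<i}. Y j \<omega>\<bar> < s)) \<and>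
      t \<le> \<bar>\<Sum>j\<in>{k..<n}. Y j \<omega>\<bar>} =
    prob {\<omega>\<in>space M. s \<le> \<bar>\<Sum>j\<in>{m..<k}. Y j \<omega>\<bar> \<and> (\<forall>i\<in>{m..<k}. \<bar>\<Sum>j\<in>{m..<i}. Y j \<omega>\<bar> < s)} *
    prob {\<omega>\<in>space M. t \<le> \<bar>\<Sum>j\<in>{k..<n}. Y j \<omega>\<bar>}"
proof -
  define P where "P f \<longleftrightarrow> s \<le> \<bar>\<Sum>j\<in>{m..<k}. f j\<bar> \<and> (\<forall>i\<in>{m..<k}. \<bar>\<Sum>j\<in>{m..<i}. f j\<bar> < s)"
    for f :: "nat \<Rightarrow> real"
  define Q where "Q f \<longleftrightarrow> t \<le> \<bar>\<Sum>j\<in>{k..<n}. f j\<bar>" for f :: "nat \<Rightarrow> real"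
  have "Measurable.pred (PiM {m..<k} (\<lambda>_. borel)) P"
    unfolding P_def
  proof (intro pred_intros_logic pred_intros_finite(3))
    show "Measurable.pred (PiM {m..<k} (\<lambda>_. borel)) (\<lambda>f. \<bar>\<Sum>j\<in>{m..<i}. f j\<bar> < s)"
      if "i \<in> {m..<k}" for i
      using that by (intro pred_sum_components) auto
  qed (auto intro: pred_sum_components)
  moreover have "Measurable.pred (PiM {k..<n} (\<lambda>_. borel)) Q"
    unfolding Q_def by (intro pred_sum_components) auto
  ultimately have "prob {\<omega>\<in>space M. P (restrict (\<lambda>i. Y i \<omega>) {m..<k}) \<and> Q (restrict (\<lambda>j. Y j \<omega>) {k..<n})} =
      prob {\<omega>\<in>space M. P (restrict (\<lambda>i. Y i \<omega>) {m..<k})} * prob {\<omega>\<in>space M. Q (restrict (\<lambda>j. Y j \<omega>) {k..<n})}"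
    by (intro indep_vars_prob_restrict_conj[OF ind]) auto
  moreover have "P (restrict (\<lambda>i. Y i \<omega>) {m..<k}) \<longleftrightarrow>
      s \<le> \<bar>\<Sum>j\<in>{m..<k}. Y j \<omega>\<bar> \<and> (\<forall>i\<in>{m..<k}. \<bar>\<Sum>j\<in>{m..<i}. Y j \<omega>\<bar> < s)" for \<omega>
    by (auto simp: P_def)
  moreover have "Q (restrict (\<lambda>j. Y j \<omega>) {k..<n}) \<longleftrightarrow> t \<le> \<bar>\<Sum>j\<in>{k..<n}. Y j \<omega>\<bar>" for \<omega>
    by (simp add: Q_def)
  ultimately show ?thesis
    by simp
qed

lemma prob_partial_sums_exceed_le:
  fixes Y :: "nat \<Rightarrow> 'a \<Rightarrow> real"
  assumes ind: "indep_vars (\<lambda>_. borel) Y UNIV" and "m \<le> n"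
    and tail: "\<And>k. m \<le> k \<Longrightarrow> k \<le> n \<Longrightarrow> prob {\<omega>\<in>space M. t \<le> \<bar>\<Sum>j\<in>{k..<n}. Y j \<omega>\<bar>} \<le> \<delta>"
  shows "prob {\<omega>\<in>space M. \<exists>k\<in>{m..n}. 2 * t \<le> \<bar>\<Sum>j\<in>{m..<k}. Y j \<omega>\<bar>}
           \<le> prob {\<omega>\<in>space M. t \<le> \<bar>\<Sum>j\<in>{m..<n}. Y j \<omega>\<bar>} + \<delta>"
proof -
  have [measurable]: "Y j \<in> borel_measurable M" for j using ind by (auto simp: indep_vars_def)
  define S where "S k k' \<omega> = (\<Sum>j\<in>{k..<k'}. Y j \<omega>)" for k k' \<omega>
  define B where "B k = {\<omega>\<in>space M. 2 * t \<le> \<bar>S m k \<omega>\<bar> \<and> (\<forall>i\<in>{m..<k}. \<bar>S m i \<omega>\<bar> < 2 * t)}" for k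
  define C where "C k = {\<omega>\<in>space M. t \<le> \<bar>S k n \<omega>\<bar>}" for k
  have [measurable]: "S k k' \<in> borel_measurable M" for k k' unfolding S_def by measurable
  have BC_sets [measurable]: "B k \<in> sets M" "C k \<in> sets M" for k unfolding B_def C_def by measurable
  have cover: "{\<omega>\<in>space M. \<exists>k\<in>{m..n}. 2 * t \<le> \<bar>S m k \<omega>\<bar>}
      \<subseteq> {\<omega>\<in>space M. t \<le> \<bar>S m n \<omega>\<bar>} \<union> (\<Union>k\<in>{m..n}. B k \<inter> C k)"
  proof safe
    fix \<omega> k assume \<omega>: "\<omega> \<in> space M" "k \<in> {m..n}" "2 * t \<le> \<bar>S m k \<omega>\<bar>"
      and not_BC: "\<omega> \<notin> (\<Union>k\<in>{m..n}. B k \<inter> C k)"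
    show "t \<le> \<bar>S m n \<omega>\<bar>"
    proof (rule ccontr)
      assume "\<not> t \<le> \<bar>S m n \<omega>\<bar>"
      then obtain k0 where "k0 \<in> {m..n}" "2 * t \<le> \<bar>S m k0 \<omega>\<bar>"
        "\<forall>i\<in>{m..<k0}. \<bar>S m i \<omega>\<bar> < 2 * t" "t \<le> \<bar>S k0 n \<omega>\<bar>"
        unfolding S_def by (rule first_exit_partial_sum[OF \<omega>(2) \<omega>(3)[unfolded S_def]])
      then have "\<omega> \<in> B k0 \<inter> C k0" using \<omega>(1) by (simp add: B_def C_def)
      then show False using not_BC \<open>k0 \<in> {m..n}\<close> by blast
    qed
  qed
  have BC_indep: "prob (B k \<inter> C k) = prob (B k) * prob (C k)" if "m \<le> k" for k
  proof -
    have "B k \<inter> C k = {\<omega>\<in>space M. (2 * t \<le> \<bar>\<Sum>j\<in>{m..<k}. Y j \<omega>\<bar> \<and>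
        (\<forall>i\<in>{m..<k}. \<bar>\<Sum>j\<in>{m..<i}. Y j \<omega>\<bar> < 2 * t)) \<and> t \<le> \<bar>\<Sum>j\<in>{k..<n}. Y j \<omega>\<bar>}"
      by (auto simp: B_def C_def S_def)
    then show ?thesis
      unfolding B_def C_def S_def by (simp only: prob_first_exit_Int_tail_sum[OF ind that])
  qed
  have B_disjoint: "B i \<inter> B j = {}" if "m \<le> i" "i < j" for i j
    using that unfolding B_def by (auto dest!: bspec[where x=i])
  have "disjoint_family_on B {m..n}"
    unfolding disjoint_family_on_def
    by (metis B_disjoint Int_commute atLeastAtMost_iff linorder_neqE_nat)
  then have prob_B: "(\<Sum>k\<in>{m..n}. prob (B k)) \<le> 1"
    using finite_measure_finite_Union[of "{m..n}" B] prob_le_1[of "\<Union>k\<in>{m..n}. B k"]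
    by (auto simp: image_subset_iff)
  have "0 \<le> \<delta>" using tail[of n] \<open>m \<le> n\<close> measure_nonneg[of M] by (meson order_trans order_refl)
  have "prob {\<omega>\<in>space M. \<exists>k\<in>{m..n}. 2 * t \<le> \<bar>S m k \<omega>\<bar>}
      \<le> prob {\<omega>\<in>space M. t \<le> \<bar>S m n \<omega>\<bar>} + prob (\<Union>k\<in>{m..n}. B k \<inter> C k)"
    by (intro order_trans[OF finite_measure_mono[OF cover] measure_Un_le]) measurable
  also have "prob (\<Union>k\<in>{m..n}. B k \<inter> C k) \<le> (\<Sum>k\<in>{m..n}. prob (B k \<inter> C k))"
    by (rule finite_measure_subadditive_finite) (auto simp: BC_sets)
  also have "\<dots> = (\<Sum>k\<in>{m..n}. prob (B k) * prob (C k))"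
    by (intro sum.cong) (auto simp: BC_indep)
  also have "\<dots> \<le> (\<Sum>k\<in>{m..n}. prob (B k) * \<delta>)"
    by (intro sum_mono mult_left_mono) (auto simp: C_def S_def intro!: tail)
  also have "\<dots> \<le> \<delta>"
    using prob_B \<open>0 \<le> \<delta>\<close> by (simp add: sum_distrib_right[symmetric] mult_left_le_one_le sum_nonneg)
  finally show ?thesis by (simp add: S_def)
qed

lemma char_distr_scaled:
  assumes [measurable]: "X \<in> borel_measurable M"
  shows "char (distr M borel (\<lambda>\<omega>. c * X \<omega>)) t = char (distr M borel X) (c * t)"
  by (simp add: char_def integral_distr mult.assoc mult.commute mult.left_commute)

lemma char_distr_tendsto_AE:
  assumes [measurable]: "\<And>n. X n \<in> borel_measurable M" "Y \<in> borel_measurable M"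
    and lim: "AE \<omega> in M. (\<lambda>n. X n \<omega>) \<longlonglongrightarrow> Y \<omega>"
  shows "(\<lambda>n. char (distr M borel (X n)) t) \<longlonglongrightarrow> char (distr M borel Y) t"
proof -
  have "(\<lambda>n. CLINT \<omega>|M. iexp (t * X n \<omega>)) \<longlonglongrightarrow> (CLINT \<omega>|M. iexp (t * Y \<omega>))"
  proof (rule integral_dominated_convergence[where w="\<lambda>_. 1"])
    show "AE \<omega> in M. (\<lambda>n. iexp (t * X n \<omega>)) \<longlonglongrightarrow> iexp (t * Y \<omega>)"
      using lim by eventually_elim (auto intro!: tendsto_intros)
  qed auto
  then show ?thesis by (simp add: char_def integral_distr)
qed

lemma sas_disp_sum:
  fixes Z :: "'i \<Rightarrow> 'a \<Rightarrow> real"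
  assumes ind: "indep_vars (\<lambda>_. borel) Z UNIV" and sas: "\<And>j. sas_disp M \<alpha> c (Z j)" and "finite F"
  shows "sas_disp M \<alpha> (c * (\<Sum>j\<in>F. \<bar>b j\<bar> powr \<alpha>)) (\<lambda>\<omega>. \<Sum>j\<in>F. b j * Z j \<omega>)"
proof -
  have [measurable]: "Z j \<in> borel_measurable M" for j using sas[of j] by (simp add: sas_disp_def)
  have "0 \<le> c" using sas by (simp add: sas_disp_def)
  have ind_F: "indep_vars (\<lambda>_. borel) (\<lambda>j \<omega>. b j * Z j \<omega>) F"
    by (rule indep_vars_compose2[OF indep_vars_subset[OF ind], where Y="\<lambda>j x. b j * x"]) auto
  have "char (distr M borel (\<lambda>\<omega>. \<Sum>j\<in>F. b j * Z j \<omega>)) t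
      = complex_of_real (exp (- (c * (\<Sum>j\<in>F. \<bar>b j\<bar> powr \<alpha>)) * \<bar>t\<bar> powr \<alpha>))" for t
  proof -
    have "char (distr M borel (\<lambda>\<omega>. \<Sum>j\<in>F. b j * Z j \<omega>)) t
        = (\<Prod>j\<in>F. char (distr M borel (\<lambda>\<omega>. b j * Z j \<omega>)) t)"
      by (rule char_distr_sum[OF ind_F])
    also have "\<dots> = complex_of_real (exp (\<Sum>j\<in>F. - c * \<bar>b j * t\<bar> powr \<alpha>))"
      using sas \<open>finite F\<close> by (simp add: char_distr_scaled sas_disp_def exp_sum)
    also have "(\<Sum>j\<in>F. - c * \<bar>b j * t\<bar> powr \<alpha>) = - (c * (\<Sum>j\<in>F. \<bar>b j\<bar> powr \<alpha>)) * \<bar>t\<bar> powr \<alpha>"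
      by (simp add: abs_mult powr_mult sum_distrib_left sum_distrib_right sum_negf algebra_simps)
    finally show ?thesis .
  qed
  then show ?thesis
    using \<open>0 \<le> c\<close> by (simp add: sas_disp_def sum_nonneg)
qed

lemma sas_disp_distr_eq_scaled:
  assumes Y: "sas_disp M \<alpha> d Y" and Z: "sas_disp M \<alpha> c Z" and "0 < c" "0 < \<alpha>"
  shows "distr M borel Y = distr M borel (\<lambda>\<omega>. (d / c) powr (1 / \<alpha>) * Z \<omega>)"
proof -
  have [measurable]: "Y \<in> borel_measurable M" "Z \<in> borel_measurable M" and "0 \<le> d"
    using Y Z by (auto simp: sas_disp_def)
  have "char (distr M borel Y) = char (distr M borel (\<lambda>\<omega>. (d / c) powr (1 / \<alpha>) * Z \<omega>))"
  proof
    fix t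
    have "\<bar>(d / c) powr (1 / \<alpha>) * t\<bar> powr \<alpha> = d / c * \<bar>t\<bar> powr \<alpha>"
      using \<open>0 < c\<close> \<open>0 < \<alpha>\<close> \<open>0 \<le> d\<close> by (simp add: abs_mult powr_mult powr_powr)
    then show "char (distr M borel Y) t = char (distr M borel (\<lambda>\<omega>. (d / c) powr (1 / \<alpha>) * Z \<omega>)) t"
      using Y Z \<open>0 < c\<close> by (simp add: char_distr_scaled sas_disp_def)
  qed
  then show ?thesis by (intro Levy_uniqueness) auto
qed

lemma prob_abs_ge_tendsto_0:
  assumes [measurable]: "X \<in> borel_measurable M"
  shows "(\<lambda>n. prob {\<omega>\<in>space M. real n \<le> \<bar>X \<omega>\<bar>}) \<longlonglongrightarrow> 0"
proof -
  have "(\<lambda>n. prob {\<omega>\<in>space M. real n \<le> \<bar>X \<omega>\<bar>}) \<longlonglongrightarrow> prob (\<Inter>n. {\<omega>\<in>space M. real n \<le> \<bar>X \<omega>\<bar>})"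
    by (rule finite_Lim_measure_decseq) (auto simp: decseq_def)
  moreover have "\<omega> \<notin> {\<omega>\<in>space M. real (nat \<lceil>\<bar>X \<omega>\<bar>\<rceil> + 1) \<le> \<bar>X \<omega>\<bar>}" for \<omega>
    by simp linarith
  then have "(\<Inter>n. {\<omega>\<in>space M. real n \<le> \<bar>X \<omega>\<bar>}) = {}" by blast
  ultimately show ?thesis by simp
qed

lemma sas_disp_prob_abs_ge:
  assumes Y: "sas_disp M \<alpha> d Y" and Z: "sas_disp M \<alpha> c Z" and "0 < c" "0 < \<alpha>"
  shows "prob {\<omega>\<in>space M. t \<le> \<bar>Y \<omega>\<bar>} = prob {\<omega>\<in>space M. t \<le> (d / c) powr (1 / \<alpha>) * \<bar>Z \<omega>\<bar>}"
proof -
  have [measurable]: "Y \<in> borel_measurable M" "Z \<in> borel_measurable M"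
    using Y Z by (auto simp: sas_disp_def)
  have "prob {\<omega>\<in>space M. t \<le> \<bar>Y \<omega>\<bar>} = measure (distr M borel Y) {x. t \<le> \<bar>x\<bar>}"
    by (subst measure_distr) (auto intro!: arg_cong[where f=prob])
  also have "\<dots> = measure (distr M borel (\<lambda>\<omega>. (d / c) powr (1 / \<alpha>) * Z \<omega>)) {x. t \<le> \<bar>x\<bar>}"
    using sas_disp_distr_eq_scaled[OF Y Z \<open>0 < c\<close> \<open>0 < \<alpha>\<close>] by simp
  also have "\<dots> = prob {\<omega>\<in>space M. t \<le> \<bar>(d / c) powr (1 / \<alpha>) * Z \<omega>\<bar>}"
    by (subst measure_distr) (auto intro!: arg_cong[where f=prob])
  finally show ?thesis by (simp add: abs_mult)
qed

lemma sas_disp_tail_uniform: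
  assumes Z: "sas_disp M \<alpha> c Z" and "0 < c" "0 < \<alpha>" "0 < t" "0 < \<eta>"
  obtains \<delta> where "0 < \<delta>"
    "\<And>d Y. sas_disp M \<alpha> d Y \<Longrightarrow> d \<le> \<delta> \<Longrightarrow> prob {\<omega>\<in>space M. t \<le> \<bar>Y \<omega>\<bar>} \<le> \<eta>"
proof -
  have [measurable]: "Z \<in> borel_measurable M" using Z by (simp add: sas_disp_def)
  have "eventually (\<lambda>n. prob {\<omega>\<in>space M. real n \<le> \<bar>Z \<omega>\<bar>} < \<eta>) sequentially"
    using prob_abs_ge_tendsto_0 \<open>0 < \<eta>\<close> by (rule order_tendstoD) simp
  then obtain N where N: "\<And>n. n \<ge> N \<Longrightarrow> prob {\<omega>\<in>space M. real n \<le> \<bar>Z \<omega>\<bar>} < \<eta>"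
    unfolding eventually_sequentially by blast
  define r where "r = real (Suc N)"
  have "0 < r" and r: "prob {\<omega>\<in>space M. r \<le> \<bar>Z \<omega>\<bar>} < \<eta>"
    using N[of "Suc N"] by (simp_all add: r_def)
  show ?thesis
  proof
    show "0 < c * (t / r) powr \<alpha>" using \<open>0 < c\<close> \<open>0 < t\<close> \<open>0 < r\<close> by simp
  next
    fix d Y assume Y: "sas_disp M \<alpha> d Y" and d: "d \<le> c * (t / r) powr \<alpha>"
    have "0 \<le> d" using Y by (simp add: sas_disp_def)
    define s where "s = (d / c) powr (1 / \<alpha>)"
    have "s \<le> ((t / r) powr \<alpha>) powr (1 / \<alpha>)"
      unfolding s_def using d \<open>0 < c\<close> \<open>0 \<le> d\<close> \<open>0 < \<alpha>\<close>
      by (intro powr_mono2) (auto simp: field_simps)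
    also have "\<dots> = t / r" using \<open>0 < \<alpha>\<close> \<open>0 < t\<close> \<open>0 < r\<close> by (simp add: powr_powr)
    finally have "s \<le> t / r" .
    have "r \<le> \<bar>Z \<omega>\<bar>" if "t \<le> s * \<bar>Z \<omega>\<bar>" for \<omega>
    proof -
      have "t \<le> t / r * \<bar>Z \<omega>\<bar>"
        using that mult_right_mono[OF \<open>s \<le> t / r\<close> abs_ge_zero] by (rule order_trans)
      then have "t * 1 \<le> t * (\<bar>Z \<omega>\<bar> / r)" by simp
      then have "1 \<le> \<bar>Z \<omega>\<bar> / r" using \<open>0 < t\<close> by (simp only: mult_le_cancel_left_pos)
      then show ?thesis using \<open>0 < r\<close> by (simp add: le_divide_eq_1_pos)
    qed
    then have "prob {\<omega>\<in>space M. t \<le> s * \<bar>Z \<omega>\<bar>} \<le> prob {\<omega>\<in>space M. r \<le> \<bar>Z \<omega>\<bar>}"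
      by (intro finite_measure_mono) auto
    then show "prob {\<omega>\<in>space M. t \<le> \<bar>Y \<omega>\<bar>} \<le> \<eta>"
      using sas_disp_prob_abs_ge[OF Y Z \<open>0 < c\<close> \<open>0 < \<alpha>\<close>] r by (simp add: s_def)
  qed
qed

lemma sas_series_exceed_prob_small:
  fixes Z :: "nat \<Rightarrow> 'a \<Rightarrow> real"
  assumes ind: "indep_vars (\<lambda>_. borel) Z UNIV" and sas: "\<And>j. sas_disp M \<alpha> c (Z j)"
    and "0 < c" "0 < \<alpha>" and summable: "summable (\<lambda>j. \<bar>b j\<bar> powr \<alpha>)" and "0 < t" "0 < \<eta>"
  obtains m where "\<And>n. prob {\<omega>\<in>space M. \<exists>k\<in>{m..n}. t \<le> \<bar>\<Sum>j\<in>{m..<k}. b j * Z j \<omega>\<bar>} \<le> \<eta>"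
proof -
  define Y where "Y j \<omega> = b j * Z j \<omega>" for j \<omega>
  have [measurable]: "Z j \<in> borel_measurable M" for j using sas[of j] by (simp add: sas_disp_def)
  have ind_Y: "indep_vars (\<lambda>_. borel) Y UNIV"
    unfolding Y_def by (rule indep_vars_compose2[OF ind, where Y="\<lambda>j x. b j * x"]) auto
  obtain \<delta> where "0 < \<delta>" and \<delta>:
    "\<And>d Y. sas_disp M \<alpha> d Y \<Longrightarrow> d \<le> \<delta> \<Longrightarrow> prob {\<omega>\<in>space M. t / 2 \<le> \<bar>Y \<omega>\<bar>} \<le> \<eta> / 2"
    using sas_disp_tail_uniform[OF sas \<open>0 < c\<close> \<open>0 < \<alpha>\<close>, of "t / 2" "\<eta> / 2"] \<open>0 < t\<close> \<open>0 < \<eta>\<close>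
    by auto
  have "(\<lambda>k. c * (\<Sum>j. \<bar>b (j + k)\<bar> powr \<alpha>)) \<longlonglongrightarrow> c * 0"
    by (intro tendsto_mult tendsto_const suminf_exist_split2 summable)
  then have "eventually (\<lambda>k. c * (\<Sum>j. \<bar>b (j + k)\<bar> powr \<alpha>) < \<delta>) sequentially"
    using \<open>0 < \<delta>\<close> by (intro order_tendstoD) auto
  then obtain m where m: "c * (\<Sum>j. \<bar>b (j + m)\<bar> powr \<alpha>) < \<delta>"
    by (auto simp: eventually_sequentially)
  have tail: "prob {\<omega>\<in>space M. t / 2 \<le> \<bar>\<Sum>j\<in>{k..<n}. Y j \<omega>\<bar>} \<le> \<eta> / 2" if "m \<le> k" for k n
  proof (rule \<delta>)
    show "sas_disp M \<alpha> (c * (\<Sum>j\<in>{k..<n}. \<bar>b j\<bar> powr \<alpha>)) (\<lambda>\<omega>. \<Sum>j\<in>{k..<n}. Y j \<omega>)"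
      unfolding Y_def by (rule sas_disp_sum[OF ind sas]) simp
    have "(\<Sum>j\<in>{k..<n}. \<bar>b j\<bar> powr \<alpha>) \<le> (\<Sum>j\<in>{m..<n}. \<bar>b j\<bar> powr \<alpha>)"
      using that by (intro sum_mono2) auto
    also have "\<dots> \<le> (\<Sum>j. \<bar>b (j + m)\<bar> powr \<alpha>)"
      by (rule sum_atLeastLessThan_le_suminf_shift[OF summable]) simp
    finally have "c * (\<Sum>j\<in>{k..<n}. \<bar>b j\<bar> powr \<alpha>) \<le> c * (\<Sum>j. \<bar>b (j + m)\<bar> powr \<alpha>)"
      using \<open>0 < c\<close> by (intro mult_left_mono) auto
    then show "c * (\<Sum>j\<in>{k..<n}. \<bar>b j\<bar> powr \<alpha>) \<le> \<delta>" using m by linarith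
  qed
  have exceed: "prob {\<omega>\<in>space M. \<exists>k\<in>{m..n}. t \<le> \<bar>\<Sum>j\<in>{m..<k}. Y j \<omega>\<bar>} \<le> \<eta>" for n
  proof (cases "m \<le> n")
    case True
    have "prob {\<omega>\<in>space M. \<exists>k\<in>{m..n}. 2 * (t / 2) \<le> \<bar>\<Sum>j\<in>{m..<k}. Y j \<omega>\<bar>}
        \<le> prob {\<omega>\<in>space M. t / 2 \<le> \<bar>\<Sum>j\<in>{m..<n}. Y j \<omega>\<bar>} + \<eta> / 2"
      by (rule prob_partial_sums_exceed_le[OF ind_Y True]) (use tail in auto)
    also have "\<dots> \<le> \<eta> / 2 + \<eta> / 2" using tail[of m n] by simp
    finally show ?thesis by simp
  qed (use \<open>0 < \<eta>\<close> in simp)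
  show ?thesis by (rule that) (use exceed in \<open>simp add: Y_def\<close>)
qed

lemma sas_series_tail_sums_small_AE:
  fixes Z :: "nat \<Rightarrow> 'a \<Rightarrow> real"
  assumes ind: "indep_vars (\<lambda>_. borel) Z UNIV" and sas: "\<And>j. sas_disp M \<alpha> c (Z j)"
    and "0 < c" "0 < \<alpha>" and summable: "summable (\<lambda>j. \<bar>b j\<bar> powr \<alpha>)" and "0 < t"
  shows "AE \<omega> in M. \<exists>m. \<forall>k\<ge>m. \<bar>\<Sum>j\<in>{m..<k}. b j * Z j \<omega>\<bar> < t"
proof -
  have [measurable]: "Z j \<in> borel_measurable M" for j using sas[of j] by (simp add: sas_disp_def)
  define E where "E = {\<omega>\<in>space M. \<forall>m. \<exists>k\<ge>m. t \<le> \<bar>\<Sum>j\<in>{m..<k}. b j * Z j \<omega>\<bar>}"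
  have [measurable]: "E \<in> sets M" unfolding E_def by measurable
  have small: "prob E \<le> \<eta>" if \<eta>: "0 < \<eta>" for \<eta>
  proof -
    obtain m where m: "\<And>n. prob {\<omega>\<in>space M. \<exists>k\<in>{m..n}. t \<le> \<bar>\<Sum>j\<in>{m..<k}. b j * Z j \<omega>\<bar>} \<le> \<eta>"
      by (rule sas_series_exceed_prob_small[OF ind sas \<open>0 < c\<close> \<open>0 < \<alpha>\<close> summable \<open>0 < t\<close> \<eta>]) blast
    define U where "U n = {\<omega>\<in>space M. \<exists>k\<in>{m..n}. t \<le> \<bar>\<Sum>j\<in>{m..<k}. b j * Z j \<omega>\<bar>}" for n
    have [measurable]: "U n \<in> sets M" for n unfolding U_def by measurable
    have "(\<lambda>n. prob (U n)) \<longlonglongrightarrow> prob (\<Union>n. U n)"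
      by (rule finite_Lim_measure_incseq) (auto simp: U_def incseq_def)
    then have "prob (\<Union>n. U n) \<le> \<eta>" using m by (intro LIMSEQ_le_const2) (auto simp: U_def)
    moreover have "E \<subseteq> (\<Union>n. U n)"
      unfolding E_def U_def by force
    then have "prob E \<le> prob (\<Union>n. U n)" by (intro finite_measure_mono) auto
    ultimately show ?thesis by simp
  qed
  have "prob E \<le> 0"
    by (rule field_le_epsilon) (simp add: small)
  then have "prob E = 0" using measure_nonneg[of M E] by linarith
  moreover have "{\<omega>\<in>space M. \<not> (\<exists>m. \<forall>k\<ge>m. \<bar>\<Sum>j\<in>{m..<k}. b j * Z j \<omega>\<bar> < t)} = E"
    unfolding E_def by (simp add: not_less)
  ultimately show ?thesis
    by (subst AE_iff_measurable) (auto simp: emeasure_eq_measure)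
qed

lemma summable_sas_series_AE:
  fixes Z :: "nat \<Rightarrow> 'a \<Rightarrow> real"
  assumes ind: "indep_vars (\<lambda>_. borel) Z UNIV" and sas: "\<And>j. sas_disp M \<alpha> c (Z j)"
    and "0 < c" "0 < \<alpha>" and summable: "summable (\<lambda>j. \<bar>b j\<bar> powr \<alpha>)"
  shows "AE \<omega> in M. summable (\<lambda>j. b j * Z j \<omega>)"
proof -
  have "AE \<omega> in M. \<forall>r. \<exists>m. \<forall>k\<ge>m. \<bar>\<Sum>j\<in>{m..<k}. b j * Z j \<omega>\<bar> < inverse (Suc r)"
    unfolding AE_all_countable
    by (intro allI sas_series_tail_sums_small_AE[OF ind sas \<open>0 < c\<close> \<open>0 < \<alpha>\<close> summable]) simp
  then show ?thesis
  proof (rule AE_mp, intro AE_I2 impI summable_if_tail_sums_small)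
    fix \<omega> and e :: real
    assume small: "\<forall>r. \<exists>m. \<forall>k\<ge>m. \<bar>\<Sum>j\<in>{m..<k}. b j * Z j \<omega>\<bar> < inverse (Suc r)" and "0 < e"
    then obtain r where "inverse (Suc r) < e" using reals_Archimedean by blast
    with small show "\<exists>m. \<forall>k\<ge>m. norm (\<Sum>j\<in>{m..<k}. b j * Z j \<omega>) < e"
      by (metis order.strict_trans real_norm_def)
  qed
qed

lemma sas_disp_AE_limit:
  assumes sas: "\<And>n. sas_disp M \<alpha> (d n) (Y n)" and [measurable]: "Y' \<in> borel_measurable M"
    and lim: "AE \<omega> in M. (\<lambda>n. Y n \<omega>) \<longlonglongrightarrow> Y' \<omega>"
  obtains D where "d \<longlonglongrightarrow> D" "sas_disp M \<alpha> D Y'"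
proof -
  \<comment> \<open>The limit characteristic function is positive at some t0 \<noteq> 0, and taking logarithms
    there shows that the dispersions converge.\<close>
  let ?\<phi> = "char (distr M borel Y')"
  have [measurable]: "Y n \<in> borel_measurable M" for n using sas[of n] by (simp add: sas_disp_def)
  have conv: "(\<lambda>n. complex_of_real (exp (- d n * \<bar>t\<bar> powr \<alpha>))) \<longlonglongrightarrow> ?\<phi> t" for t
    using char_distr_tendsto_AE[of Y Y' t] sas lim by (simp add: sas_disp_def)
  interpret Y': real_distribution "distr M borel Y'" by simp
  have "((\<lambda>t. Re (?\<phi> t)) \<longlongrightarrow> Re (?\<phi> 0)) (at 0)"
    using Y'.isCont_char[of 0] by (intro tendsto_Re) (simp add: isCont_def)
  then have "eventually (\<lambda>t. 0 < Re (?\<phi> t)) (at 0)"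
    by (intro order_tendstoD) (auto simp: Y'.char_zero)
  then obtain e where "0 < e" and e: "\<And>t. t \<noteq> 0 \<Longrightarrow> dist t 0 < e \<Longrightarrow> 0 < Re (?\<phi> t)"
    unfolding eventually_at by auto
  define t0 where "t0 = e / 2"
  have "t0 \<noteq> 0" and pos: "0 < Re (?\<phi> t0)"
    using e[of t0] \<open>0 < e\<close> by (auto simp: t0_def)
  define p where "p = \<bar>t0\<bar> powr \<alpha>"
  define D where "D = - ln (Re (?\<phi> t0)) / p"
  have "0 < p" using \<open>t0 \<noteq> 0\<close> by (simp add: p_def)
  have "(\<lambda>n. exp (- d n * p)) \<longlonglongrightarrow> Re (?\<phi> t0)"
    using tendsto_Re[OF conv[of t0]] by (simp add: p_def)
  then have "(\<lambda>n. ln (exp (- d n * p)) / - p) \<longlonglongrightarrow> ln (Re (?\<phi> t0)) / - p"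
    using pos \<open>0 < p\<close> by (intro tendsto_intros) auto
  then have d: "d \<longlonglongrightarrow> D"
    using \<open>0 < p\<close> by (simp add: D_def)
  have "0 \<le> D"
    using sas by (intro LIMSEQ_le_const[OF d]) (auto simp: sas_disp_def)
  moreover have "?\<phi> t = complex_of_real (exp (- D * \<bar>t\<bar> powr \<alpha>))" for t
  proof (rule LIMSEQ_unique[OF conv])
    show "(\<lambda>n. complex_of_real (exp (- d n * \<bar>t\<bar> powr \<alpha>))) \<longlonglongrightarrow> complex_of_real (exp (- D * \<bar>t\<bar> powr \<alpha>))"
      by (intro tendsto_of_real tendsto_exp tendsto_mult_right tendsto_minus d)
  qed
  ultimately have "sas_disp M \<alpha> D Y'" by (simp add: sas_disp_def)
  with d show ?thesis by (rule that)
qed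

lemma sas_disp_suminf:
  fixes Z :: "nat \<Rightarrow> 'a \<Rightarrow> real"
  assumes ind: "indep_vars (\<lambda>_. borel) Z UNIV" and sas: "\<And>j. sas_disp M \<alpha> c (Z j)" and "0 < c"
    and Y_meas: "Y \<in> borel_measurable M" and sums: "AE \<omega> in M. (\<lambda>j. b j * Z j \<omega>) sums Y \<omega>"
  shows "summable (\<lambda>j. \<bar>b j\<bar> powr \<alpha>) \<and> sas_disp M \<alpha> (c * (\<Sum>j. \<bar>b j\<bar> powr \<alpha>)) Y"
proof -
  have partial_sums: "sas_disp M \<alpha> (c * (\<Sum>j<n. \<bar>b j\<bar> powr \<alpha>)) (\<lambda>\<omega>. \<Sum>j<n. b j * Z j \<omega>)" for n
    by (rule sas_disp_sum[OF ind sas]) simp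
  have "AE \<omega> in M. (\<lambda>n. \<Sum>j<n. b j * Z j \<omega>) \<longlonglongrightarrow> Y \<omega>"
    using sums by (simp add: sums_def)
  then obtain D where D: "(\<lambda>n. c * (\<Sum>j<n. \<bar>b j\<bar> powr \<alpha>)) \<longlonglongrightarrow> D" "sas_disp M \<alpha> D Y"
    by (rule sas_disp_AE_limit[OF partial_sums Y_meas])
  have "(\<lambda>j. \<bar>b j\<bar> powr \<alpha>) sums (D / c)"
    unfolding sums_def using tendsto_divide[OF D(1) tendsto_const, of c] \<open>0 < c\<close> by simp
  then show ?thesis using D(2) \<open>0 < c\<close> by (simp add: sums_iff)
qed

lemma sas_disp_prediction_error:
  fixes Z :: "nat \<Rightarrow> 'a \<Rightarrow> real" and a A :: "nat \<Rightarrow> real"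
  assumes ind: "indep_vars (\<lambda>_. borel) Z UNIV" and sas: "\<And>j. sas_disp M \<alpha> c (Z j)"
    and "0 < c" "0 < \<alpha>" and summable: "summable (\<lambda>j. \<bar>a j\<bar> powr \<alpha>)"
    and predictor: "AE \<omega> in M. summable (\<lambda>j. A j * Z (j + l) \<omega>)"
  defines "b \<equiv> \<lambda>k. if k < l then a k else a k - A (k - l)"
  shows "summable (\<lambda>k. \<bar>b k\<bar> powr \<alpha>) \<and>
    sas_disp M \<alpha> (c * (\<Sum>k. \<bar>b k\<bar> powr \<alpha>)) (\<lambda>\<omega>. (\<Sum>j. a j * Z j \<omega>) - (\<Sum>j. A j * Z (j + l) \<omega>))"
proof (rule sas_disp_suminf[OF ind sas \<open>0 < c\<close>])
  have [measurable]: "Z j \<in> borel_measurable M" for j using sas[of j] by (simp add: sas_disp_def)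
  show "(\<lambda>\<omega>. (\<Sum>j. a j * Z j \<omega>) - (\<Sum>j. A j * Z (j + l) \<omega>)) \<in> borel_measurable M"
    by measurable
  define A' where "A' k = (if k < l then 0 else A (k - l))" for k
  have "AE \<omega> in M. (\<lambda>k. A' k * Z k \<omega>) sums (\<Sum>j. A j * Z (j + l) \<omega>)"
    using predictor
  proof eventually_elim
    case (elim \<omega>)
    then have "(\<lambda>j. A' (j + l) * Z (j + l) \<omega>) sums (\<Sum>j. A j * Z (j + l) \<omega>)"
      by (simp add: A'_def summable_sums)
    then show ?case by (subst (asm) sums_zero_iff_shift) (auto simp: A'_def)
  qed
  moreover have "AE \<omega> in M. (\<lambda>k. a k * Z k \<omega>) sums (\<Sum>j. a j * Z j \<omega>)"
    using summable_sas_series_AE[OF ind sas \<open>0 < c\<close> \<open>0 < \<alpha>\<close> summable] by (auto simp: summable_sums)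
  ultimately show "AE \<omega> in M. (\<lambda>k. b k * Z k \<omega>) sums ((\<Sum>j. a j * Z j \<omega>) - (\<Sum>j. A j * Z (j + l) \<omega>))"
  proof eventually_elim
    case (elim \<omega>)
    have "b k * Z k \<omega> = a k * Z k \<omega> - A' k * Z k \<omega>" for k
      by (simp add: b_def A'_def algebra_simps)
    then show ?case using sums_diff[OF elim(2) elim(1)] by simp
  qed
qed

lemma sas_disp_prediction_error_ge:
  fixes Z :: "nat \<Rightarrow> 'a \<Rightarrow> real" and a A :: "nat \<Rightarrow> real"
  assumes "indep_vars (\<lambda>_. borel) Z UNIV" "\<And>j. sas_disp M \<alpha> c (Z j)"
    and "0 < c" "0 < \<alpha>" "summable (\<lambda>j. \<bar>a j\<bar> powr \<alpha>)"
    and "AE \<omega> in M. summable (\<lambda>j. A j * Z (j + l) \<omega>)"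
  shows "\<exists>d. sas_disp M \<alpha> d (\<lambda>\<omega>. (\<Sum>j. a j * Z j \<omega>) - (\<Sum>j. A j * Z (j + l) \<omega>)) \<and>
    c * (\<Sum>k<l. \<bar>a k\<bar> powr \<alpha>) \<le> d"
proof -
  define b where "b k = (if k < l then a k else a k - A (k - l))" for k
  have b: "summable (\<lambda>k. \<bar>b k\<bar> powr \<alpha>)"
    "sas_disp M \<alpha> (c * (\<Sum>k. \<bar>b k\<bar> powr \<alpha>)) (\<lambda>\<omega>. (\<Sum>j. a j * Z j \<omega>) - (\<Sum>j. A j * Z (j + l) \<omega>))"
    using sas_disp_prediction_error[OF assms] unfolding b_def by auto
  have "(\<Sum>k<l. \<bar>a k\<bar> powr \<alpha>) = (\<Sum>k<l. \<bar>b k\<bar> powr \<alpha>)" by (simp add: b_def)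
  also have "\<dots> \<le> (\<Sum>k. \<bar>b k\<bar> powr \<alpha>)" using b(1) by (intro sum_le_suminf) auto
  finally show ?thesis using b(2) \<open>0 < c\<close> by (intro exI[of _ "c * (\<Sum>k. \<bar>b k\<bar> powr \<alpha>)"]) simp
qed

lemma sas_disp_best_prediction_error:
  fixes Z :: "nat \<Rightarrow> 'a \<Rightarrow> real" and a :: "nat \<Rightarrow> real"
  assumes ind: "indep_vars (\<lambda>_. borel) Z UNIV" and sas: "\<And>j. sas_disp M \<alpha> c (Z j)"
    and "0 < c" "0 < \<alpha>" and summable: "summable (\<lambda>j. \<bar>a j\<bar> powr \<alpha>)"
  shows "sas_disp M \<alpha> (c * (\<Sum>k<l. \<bar>a k\<bar> powr \<alpha>))
    (\<lambda>\<omega>. (\<Sum>j. a j * Z j \<omega>) - (\<Sum>j. a (j + l) * Z (j + l) \<omega>))"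
proof -
  have "AE \<omega> in M. summable (\<lambda>j. a (j + l) * Z (j + l) \<omega>)"
    using summable_sas_series_AE[OF ind sas \<open>0 < c\<close> \<open>0 < \<alpha>\<close> summable]
    by eventually_elim (rule summable_ignore_initial_segment)
  note error = sas_disp_prediction_error[OF ind sas \<open>0 < c\<close> \<open>0 < \<alpha>\<close> summable this]
  have "(if k < l then a k else a k - a (k - l + l)) = (if k < l then a k else 0)" for k
    by simp
  then have "sas_disp M \<alpha> (c * (\<Sum>k. \<bar>if k < l then a k else 0\<bar> powr \<alpha>))
      (\<lambda>\<omega>. (\<Sum>j. a j * Z j \<omega>) - (\<Sum>j. a (j + l) * Z (j + l) \<omega>))"
    using error by (simp only:)
  moreover have "(\<Sum>k. \<bar>if k < l then a k else 0\<bar> powr \<alpha>) = (\<Sum>k<l. \<bar>a k\<bar> powr \<alpha>)"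
    by (subst suminf_finite[of "{..<l}"]) auto
  ultimately show ?thesis by simp
qed

end

theorem mainTheorem3:
  fixes M :: "'a measure" and \<alpha> :: real and \<epsilon> :: "int \<Rightarrow> 'a \<Rightarrow> real"
    and a :: "int \<Rightarrow> nat \<Rightarrow> real" and T :: int and h l :: nat
  assumes "prob_space M" and "0 < \<alpha>" and "\<alpha> < 2"
    and "prob_space.indep_vars M (\<lambda>_. borel) \<epsilon> UNIV"
    and "\<And>t. sas_disp M \<alpha> ((1 / sqrt 2) powr \<alpha>) (\<epsilon> t)"
    and "\<And>t. summable (\<lambda>j. \<bar>a t j\<bar> powr min 1 \<alpha>)"
    and "1 \<le> h" and "1 \<le> l" and "l \<le> h"
  shows "let T' = T - int h - 1;
             X = (\<lambda>\<omega>. \<Sum>j. a (T' + int l) j * \<epsilon> (T' + int l - int j) \<omega>);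
             e = (\<lambda>A \<omega>. X \<omega> - (\<Sum>j. A j * \<epsilon> (T' - int j) \<omega>))
         in \<exists>d0. sas_disp M \<alpha> d0 (e (\<lambda>j. a (T' + int l) (j + l))) \<and>
               (\<forall>A :: nat \<Rightarrow> real. (AE \<omega> in M. summable (\<lambda>j. A j * \<epsilon> (T' - int j) \<omega>)) \<longrightarrow>
                   (\<exists>d. sas_disp M \<alpha> d (e A) \<and> d0 \<le> d))"
proof -
  interpret prob_space M by fact
  define T' where "T' = T - int h - 1"
  define Z where "Z j = \<epsilon> (T' + int l - int j)" for j
  define c where "c = (1 / sqrt 2) powr \<alpha>"
  have "0 < c" by (simp add: c_def)
  have ind: "indep_vars (\<lambda>_. borel) Z UNIV"
    using indep_vars_reindex[OF assms(4), of "\<lambda>j::nat. T' + int l - int j" UNIV]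
    by (simp add: Z_def[abs_def] inj_on_def)
  have sas: "sas_disp M \<alpha> c (Z j)" for j using assms(5) by (simp add: Z_def c_def)
  have summable: "summable (\<lambda>j. \<bar>a (T' + int l) j\<bar> powr \<alpha>)"
    by (rule summable_abs_powr_larger_exponent[OF assms(6)]) (use \<open>0 < \<alpha>\<close> in auto)
  have past: "\<epsilon> (T' - int j) = Z (j + l)" for j by (simp add: Z_def)
  show ?thesis
    unfolding Let_def T'_def[symmetric] past Z_def[symmetric]
    using sas_disp_best_prediction_error[OF ind sas \<open>0 < c\<close> \<open>0 < \<alpha>\<close> summable]
      sas_disp_prediction_error_ge[OF ind sas \<open>0 < c\<close> \<open>0 < \<alpha>\<close> summable] by blast
qed

end
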